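(* Let $X$ be a finite simplicial complex and $d\ge0$. There is a one-to-one correspondence between the equivalence classes of $\sim^{\uparrow}_{d+1}$ and the distinct maps of the form $B_{d+1}FB_{d+1}^\intercal$ (with $F$ a smooth map $C_{d+1}(X)\to C_{d+1}(X)$), realized by $[F]\mapsto B_{d+1}FB_{d+1}^\intercal$. Similarly, there is a one-to-one correspondence between the equivalence classes of $\sim^{\downarrow}_{d-1}$ and the distinct maps of the form $B_d^\intercal HB_d$ (with $H$ a smooth map $C_{d-1}(X)\to C_{d-1}(X)$), realized by $[H]\mapsto B_d^\intercal HB_d$.
   Context: A finite simplicial complex $X$ on vertex set $\{1,\dots,n\}$ is a collection of nonempty subsets closed under taking nonempty subsets; $X_d$ is the set of simplices with $d+1$ vertices; a $d$-simplex with vertices $i_0<\dots<i_d$ is written $[i_0,\dots,i_d]$. $C_d(X)$ is the real vector space with basis $X_d$ and inner product making $X_d$ orthonormal ($C_{-1}(X)=0$). The boundary map is $\partial_d[i_0,\dots,i_d]=\sum_{k=0}^d(-1)^k[i_0,\dots,\widehat{i_k},\dots,i_d]$ with matrix $B_d$; $B_d^\intercal$ its transpose. $P_{d+1}$ is the orthogonal projection of $C_{d+1}(X)$ onto $\operatorname{im}(B_{d+1}^\intercal)$ and $Q_{d-1}$ is the orthogonal projection of $C_{d-1}(X)$ onto $\operatorname{im}(B_d)$. On smooth maps $C_{d+1}(X)\to C_{d+1}(X)$ the equivalence relation $\sim^{\uparrow}_{d+1}$ is $\mathcal A\sim^{\uparrow}_{d+1}\mathcal B\iff P_{d+1}\mathcal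 AP_{d+1}=P_{d+1}\mathcal BP_{d+1}$; on smooth maps $C_{d-1}(X)\to C_{d-1}(X)$ the relation $\sim^{\downarrow}_{d-1}$ is $\mathcal A\sim^{\downarrow}_{d-1}\mathcal B\iff Q_{d-1}\mathcal AQ_{d-1}=Q_{d-1}\mathcal BQ_{d-1}$. *)

theory Defs
  imports "HOL-Analysis.Analysis"
begin

text \<open>Simplices are vertex sets (nat set); a vset with vertices i_0<...<i_d is oriented
by this increasing order. Chains of degree k are functions (nat set => real) supported on X_k.\<close>

type_synonym vset = "nat set"
type_synonym chain = "vset \<Rightarrow> real"

definition simplicial_complex :: "nat \<Rightarrow> vset set \<Rightarrow> bool" where
  "simplicial_complex n X \<longleftrightarrow>
     X \<subseteq> {\<sigma>. \<sigma> \<noteq> {} \<and> \<sigma> \<subseteq> {1..n}} \<and>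
     (\<forall>\<sigma>\<in>X. \<forall>\<tau>. \<tau> \<noteq> {} \<and> \<tau> \<subseteq> \<sigma> \<longrightarrow> \<tau> \<in> X)"

text \<open>X_k: simplices with k+1 vertices (k an integer, so X_{-1} is empty).\<close>
definition simplices :: "vset set \<Rightarrow> int \<Rightarrow> vset set" where
  "simplices X k = {\<sigma>\<in>X. int (card \<sigma>) = k + 1}"

definition chainsp :: "vset set \<Rightarrow> chain set" where
  "chainsp I = {c. \<forall>\<sigma>. \<sigma> \<notin> I \<longrightarrow> c \<sigma> = 0}"

text \<open>C_k(X), realised as chains supported on X_k (so C_{-1} = {0}).\<close>
definition chains :: "vset set \<Rightarrow> int \<Rightarrow> chain set" where
  "chains X k = chainsp (simplices X k)"

text \<open>Coefficient of tau in the boundary of sigma: (-1)^j if tau is sigma with its j-th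
(0-based, increasing order) vertex removed, 0 otherwise.\<close>
definition bd_coeff :: "vset \<Rightarrow> vset \<Rightarrow> real" where
  "bd_coeff \<sigma> \<tau> =
     (if \<tau> \<subseteq> \<sigma> \<and> card (\<sigma> - \<tau>) = 1
      then (-1) ^ card {u\<in>\<sigma>. u < the_elem (\<sigma> - \<tau>)} else 0)"

definition bd :: "vset set \<Rightarrow> int \<Rightarrow> chain \<Rightarrow> chain" where
  "bd X k c = (\<lambda>\<tau>. if \<tau> \<in> simplices X (k - 1)
                    then (\<Sum>\<sigma>\<in>simplices X k. bd_coeff \<sigma> \<tau> * c \<sigma>) else 0)"

definition bdT :: "vset set \<Rightarrow> int \<Rightarrow> chain \<Rightarrow> chain" where
  "bdT X k c = (\<lambda>\<sigma>. if \<sigma> \<in> simplices X k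
                    then (\<Sum>\<tau>\<in>simplices X (k - 1). bd_coeff \<sigma> \<tau> * c \<tau>) else 0)"

definition chain_inner :: "vset set \<Rightarrow> int \<Rightarrow> chain \<Rightarrow> chain \<Rightarrow> real" where
  "chain_inner X k a b = (\<Sum>\<sigma>\<in>simplices X k. a \<sigma> * b \<sigma>)"

definition orth_proj :: "vset set \<Rightarrow> int \<Rightarrow> chain set \<Rightarrow> chain \<Rightarrow> chain" where
  "orth_proj X k V c =
     (THE p. p \<in> V \<and> (\<forall>v\<in>V. chain_inner X k (\<lambda>\<sigma>. c \<sigma> - p \<sigma>) v = 0))"

definition projP :: "vset set \<Rightarrow> int \<Rightarrow> chain \<Rightarrow> chain" where
  "projP X k = orth_proj X k (bdT X k ` chains X (k - 1))"

definition projQ :: "vset set \<Rightarrow> int \<Rightarrow> chain \<Rightarrow> chain" where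
  "projQ X k = orth_proj X k (bd X (k + 1) ` chains X (k + 1))"

text \<open>Smoothness on the finite-dimensional space of chains supported on I (coordinates indexed
by I): all iterated partial derivatives exist and are continuous.\<close>
definition pderiv_chain :: "vset \<Rightarrow> (chain \<Rightarrow> real) \<Rightarrow> chain \<Rightarrow> real" where
  "pderiv_chain \<sigma> g c = deriv (\<lambda>t. g (c(\<sigma> := c \<sigma> + t))) 0"

definition smooth_fun :: "vset set \<Rightarrow> (chain \<Rightarrow> real) \<Rightarrow> bool" where
  "smooth_fun I g \<longleftrightarrow>
     (\<forall>s. set s \<subseteq> I \<longrightarrow>
        continuous_on (chainsp I) (foldr pderiv_chain s g) \<and>
        (\<forall>\<sigma>\<in>I. \<forall>c\<in>chainsp I.
            (\<lambda>t. foldr pderiv_chain s g (c(\<sigma> := c \<sigma> + t))) differentiable (at 0)))"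

text \<open>Smooth maps C_k -> C_k; maps are represented extensionally (value 0 off C_k),
so that HOL equality of representatives is equality of maps on C_k.\<close>
definition restr :: "chain set \<Rightarrow> (chain \<Rightarrow> chain) \<Rightarrow> chain \<Rightarrow> chain" where
  "restr C f = (\<lambda>c. if c \<in> C then f c else (\<lambda>_. 0))"

definition smooth_maps :: "vset set \<Rightarrow> int \<Rightarrow> (chain \<Rightarrow> chain) set" where
  "smooth_maps X k =
     {F. F ` chains X k \<subseteq> chains X k \<and> restr (chains X k) F = F \<and>
         (\<forall>\<tau>\<in>simplices X k. smooth_fun (simplices X k) (\<lambda>c. F c \<tau>))}"

definition rel_up :: "vset set \<Rightarrow> int \<Rightarrow> ((chain \<Rightarrow> chain) \<times> (chain \<Rightarrow> chain)) set" where
  "rel_up X k = {(A, B). A \<in> smooth_maps X k \<and> B \<in> smooth_maps X k \<and>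
     restr (chains X k) (projP X k \<circ> A \<circ> projP X k) =
     restr (chains X k) (projP X k \<circ> B \<circ> projP X k)}"

definition rel_down :: "vset set \<Rightarrow> int \<Rightarrow> ((chain \<Rightarrow> chain) \<times> (chain \<Rightarrow> chain)) set" where
  "rel_down X k = {(A, B). A \<in> smooth_maps X k \<and> B \<in> smooth_maps X k \<and>
     restr (chains X k) (projQ X k \<circ> A \<circ> projQ X k) =
     restr (chains X k) (projQ X k \<circ> B \<circ> projQ X k)}"

definition up_sandwich :: "vset set \<Rightarrow> int \<Rightarrow> (chain \<Rightarrow> chain) \<Rightarrow> chain \<Rightarrow> chain" where
  "up_sandwich X d F = restr (chains X d) (bd X (d + 1) \<circ> F \<circ> bdT X (d + 1))"

definition down_sandwich :: "vset set \<Rightarrow> int \<Rightarrow> (chain \<Rightarrow> chain) \<Rightarrow> chain \<Rightarrow> chain" where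
  "down_sandwich X d H = restr (chains X d) (bdT X d \<circ> H \<circ> bd X d)"

end

theory Submission
  imports Defs
begin

(* Let L be B_{d+1}^T (resp. B_d), M = L^T and P the orthogonal projection onto im L. Then
   P L = L, M P = M (the residual y - P y is orthogonal to im L, hence killed by M), and
   M y = M z implies P y = P z (y - z is then orthogonal to im L). So P F P and P G P agree
   iff M F L and M G L agree: the relation is exactly the kernel of the sandwich map, and
   the quotient by the kernel of a map is in bijection with its image. *)

definition inner_on :: "'a set \<Rightarrow> ('a \<Rightarrow> real) \<Rightarrow> ('a \<Rightarrow> real) \<Rightarrow> real" where
  "inner_on S a b = (\<Sum>x\<in>S. a x * b x)"

lemma inner_on_self_eq_0_iff:
  assumes "finite S"
  shows "inner_on S r r = 0 \<longleftrightarrow> (\<forall>x\<in>S. r x = 0)"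
  using sum_nonneg_eq_0_iff[OF assms, of "\<lambda>x. r x * r x"] by (simp add: inner_on_def)

lemma inner_on_lincomb_right:
  "inner_on S w (\<lambda>x. \<Sum>k\<in>J. b k * g k x) = (\<Sum>k\<in>J. b k * inner_on S w (g k))"
  unfolding inner_on_def sum_distrib_left by (subst sum.swap) (simp add: mult_ac)

lemma inner_on_diff_scaled_left:
  "inner_on S (\<lambda>x. a x - c * b x) v = inner_on S a v - c * inner_on S b v"
  by (simp add: inner_on_def algebra_simps sum_subtractf sum_distrib_left)

lemma orthogonal_residual_exists:
  assumes "finite J" "finite S"
  shows "\<exists>a. \<forall>i\<in>J. inner_on S (\<lambda>x. y x - (\<Sum>k\<in>J. a k * g k x)) (g i) = 0"
  using assms(1)
proof (induction J arbitrary: y rule: finite_induct)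
  case empty
  show ?case by simp
next
  case (insert j J)
  obtain ay where ay: "\<forall>i\<in>J. inner_on S (\<lambda>x. y x - (\<Sum>k\<in>J. ay k * g k x)) (g i) = 0"
    using insert.IH by blast
  obtain ag where ag: "\<forall>i\<in>J. inner_on S (\<lambda>x. g j x - (\<Sum>k\<in>J. ag k * g k x)) (g i) = 0"
    using insert.IH by blast
  define e where "e = (\<lambda>x. y x - (\<Sum>k\<in>J. ay k * g k x))"
  define r where "r = (\<lambda>x. g j x - (\<Sum>k\<in>J. ag k * g k x))"
  \<comment> \<open>Orthogonalise g j against g ` J to get r, then remove from e its component along r.\<close>
  define \<alpha> where "\<alpha> = inner_on S e r / inner_on S r r"
  define w where "w = (\<lambda>x. e x - \<alpha> * r x)"
  have w_J: "inner_on S w (g i) = 0" if "i \<in> J" for i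
    using ay ag that unfolding w_def inner_on_diff_scaled_left by (simp add: e_def r_def)
  \<comment> \<open>If r vanishes on S, division by zero gives \<alpha> = 0, and this still holds.\<close>
  have "inner_on S e r = \<alpha> * inner_on S r r"
  proof (cases "inner_on S r r = 0")
    case True
    then have "\<forall>x\<in>S. r x = 0" using inner_on_self_eq_0_iff[OF assms(2)] by blast
    then show ?thesis by (simp add: inner_on_def)
  qed (simp add: \<alpha>_def)
  then have w_r: "inner_on S w r = 0"
    unfolding w_def inner_on_diff_scaled_left by simp
  have "inner_on S w (g j) = inner_on S w r + inner_on S w (\<lambda>x. \<Sum>k\<in>J. ag k * g k x)"
    unfolding inner_on_def r_def by (simp add: sum.distrib[symmetric] right_diff_distrib)
  then have w_j: "inner_on S w (g j) = 0"
    using w_r w_J by (simp add: inner_on_lincomb_right)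
  define a where "a = (\<lambda>k. ay k - \<alpha> * ag k)(j := \<alpha>)"
  have "(\<Sum>k\<in>J. a k * g k x) = (\<Sum>k\<in>J. ay k * g k x - \<alpha> * (ag k * g k x))" for x
    using insert.hyps by (intro sum.cong) (auto simp: a_def algebra_simps)
  then have "(\<Sum>k\<in>insert j J. a k * g k x) = (\<Sum>k\<in>J. ay k * g k x) + \<alpha> * r x" for x
    using insert.hyps by (simp add: a_def r_def sum_subtractf sum_distrib_left algebra_simps)
  then have "(\<lambda>x. y x - (\<Sum>k\<in>insert j J. a k * g k x)) = w"
    by (simp add: fun_eq_iff w_def e_def)
  then show ?case
    using w_J w_j by (intro exI[of _ a]) simp
qed

definition mat_apply :: "vset set \<Rightarrow> vset set \<Rightarrow> (vset \<Rightarrow> vset \<Rightarrow> real) \<Rightarrow> chain \<Rightarrow> chain" where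
  "mat_apply S T m c = (\<lambda>\<sigma>. if \<sigma> \<in> S then (\<Sum>\<tau>\<in>T. m \<sigma> \<tau> * c \<tau>) else 0)"

definition mat_transpose_apply ::
    "vset set \<Rightarrow> vset set \<Rightarrow> (vset \<Rightarrow> vset \<Rightarrow> real) \<Rightarrow> chain \<Rightarrow> chain" where
  "mat_transpose_apply S T m w = (\<lambda>\<tau>. if \<tau> \<in> T then (\<Sum>\<sigma>\<in>S. m \<sigma> \<tau> * w \<sigma>) else 0)"

definition col_space :: "vset set \<Rightarrow> vset set \<Rightarrow> (vset \<Rightarrow> vset \<Rightarrow> real) \<Rightarrow> chain set" where
  "col_space S T m = mat_apply S T m ` chainsp T"

definition orth_proj_on :: "vset set \<Rightarrow> chain set \<Rightarrow> chain \<Rightarrow> chain" where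
  "orth_proj_on S V y = (THE p. p \<in> V \<and> (\<forall>v\<in>V. inner_on S (\<lambda>\<sigma>. y \<sigma> - p \<sigma>) v = 0))"

lemma inner_on_mat_apply:
  "inner_on S w (mat_apply S T m c) = inner_on T (mat_transpose_apply S T m w) c"
proof -
  have "inner_on S w (mat_apply S T m c) = (\<Sum>\<sigma>\<in>S. \<Sum>\<tau>\<in>T. w \<sigma> * (m \<sigma> \<tau> * c \<tau>))"
    by (simp add: inner_on_def mat_apply_def sum_distrib_left)
  also have "\<dots> = (\<Sum>\<tau>\<in>T. \<Sum>\<sigma>\<in>S. w \<sigma> * (m \<sigma> \<tau> * c \<tau>))"
    by (rule sum.swap)
  also have "\<dots> = inner_on T (mat_transpose_apply S T m w) c"
    by (simp add: inner_on_def mat_transpose_apply_def sum_distrib_left mult_ac)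
  finally show ?thesis .
qed

lemma mat_apply_diff:
  "mat_apply S T m (\<lambda>\<tau>. c \<tau> - c' \<tau>) = (\<lambda>\<sigma>. mat_apply S T m c \<sigma> - mat_apply S T m c' \<sigma>)"
  by (auto simp: mat_apply_def sum_subtractf right_diff_distrib)

lemma mat_transpose_apply_diff:
  "mat_transpose_apply S T m (\<lambda>\<sigma>. w \<sigma> - w' \<sigma>)
     = (\<lambda>\<tau>. mat_transpose_apply S T m w \<tau> - mat_transpose_apply S T m w' \<tau>)"
  by (auto simp: mat_transpose_apply_def sum_subtractf right_diff_distrib)

lemma col_space_orth_residual_exists:
  assumes "finite S" "finite T"
  shows "\<exists>p\<in>col_space S T m. \<forall>v\<in>col_space S T m. inner_on S (\<lambda>\<sigma>. y \<sigma> - p \<sigma>) v = 0"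
proof -
  define g where "g \<tau> \<sigma> = (if \<sigma> \<in> S then m \<sigma> \<tau> else 0)" for \<tau> \<sigma>
  have mat_apply_lincomb: "mat_apply S T m c = (\<lambda>\<sigma>. \<Sum>\<tau>\<in>T. c \<tau> * g \<tau> \<sigma>)" for c
    by (auto simp: mat_apply_def g_def mult.commute)
  obtain a where a: "\<forall>\<tau>\<in>T. inner_on S (\<lambda>\<sigma>. y \<sigma> - (\<Sum>k\<in>T. a k * g k \<sigma>)) (g \<tau>) = 0"
    using orthogonal_residual_exists[OF assms(2,1)] by blast
  define c where "c \<tau> = (if \<tau> \<in> T then a \<tau> else 0)" for \<tau>
  have p: "mat_apply S T m c = (\<lambda>\<sigma>. \<Sum>k\<in>T. a k * g k \<sigma>)"
    unfolding mat_apply_lincomb by (auto simp: c_def)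
  have orth: "inner_on S (\<lambda>\<sigma>. y \<sigma> - (\<Sum>k\<in>T. a k * g k \<sigma>)) (mat_apply S T m c') = 0" for c'
    unfolding mat_apply_lincomb[of c'] using a by (simp add: inner_on_lincomb_right)
  show ?thesis
  proof (rule bexI)
    show "mat_apply S T m c \<in> col_space S T m"
      by (simp add: col_space_def c_def chainsp_def)
    show "\<forall>v\<in>col_space S T m. inner_on S (\<lambda>\<sigma>. y \<sigma> - mat_apply S T m c \<sigma>) v = 0"
      unfolding p col_space_def using orth by blast
  qed
qed

lemma col_space_orth_residual_unique:
  assumes "finite S"
    and "p \<in> col_space S T m" "\<forall>v\<in>col_space S T m. inner_on S (\<lambda>\<sigma>. y \<sigma> - p \<sigma>) v = 0"
    and "p' \<in> col_space S T m" "\<forall>v\<in>col_space S T m. inner_on S (\<lambda>\<sigma>. y \<sigma> - p' \<sigma>) v = 0"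
  shows "p = p'"
proof -
  obtain c c' where c: "c \<in> chainsp T" "p = mat_apply S T m c"
    and c': "c' \<in> chainsp T" "p' = mat_apply S T m c'"
    using assms(2,4) by (auto simp: col_space_def)
  define d where "d = (\<lambda>\<sigma>. p \<sigma> - p' \<sigma>)"
  have "d = mat_apply S T m (\<lambda>\<tau>. c \<tau> - c' \<tau>)" "(\<lambda>\<tau>. c \<tau> - c' \<tau>) \<in> chainsp T"
    using c c' by (simp_all add: d_def mat_apply_diff chainsp_def)
  then have "d \<in> col_space S T m"
    by (simp add: col_space_def)
  moreover have "inner_on S d d = inner_on S (\<lambda>\<sigma>. y \<sigma> - p' \<sigma>) d - inner_on S (\<lambda>\<sigma>. y \<sigma> - p \<sigma>) d"
    by (simp add: inner_on_def d_def sum_subtractf[symmetric] algebra_simps)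
  ultimately have "\<forall>\<sigma>\<in>S. d \<sigma> = 0"
    using assms(3,5) inner_on_self_eq_0_iff[OF assms(1)] by simp
  moreover have "p \<sigma> = 0 \<and> p' \<sigma> = 0" if "\<sigma> \<notin> S" for \<sigma>
    using c c' that by (simp add: mat_apply_def)
  ultimately show ?thesis
    by (auto simp: d_def fun_eq_iff)
qed

lemma orth_proj_on_col_space:
  assumes "finite S" "finite T"
  shows "orth_proj_on S (col_space S T m) y \<in> col_space S T m"
    and "\<forall>v\<in>col_space S T m. inner_on S (\<lambda>\<sigma>. y \<sigma> - orth_proj_on S (col_space S T m) y \<sigma>) v = 0"
proof -
  have "\<exists>!p. p \<in> col_space S T m \<and> (\<forall>v\<in>col_space S T m. inner_on S (\<lambda>\<sigma>. y \<sigma> - p \<sigma>) v = 0)"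
    using col_space_orth_residual_exists[OF assms] col_space_orth_residual_unique[OF assms(1)] by blast
  then have "orth_proj_on S (col_space S T m) y \<in> col_space S T m \<and>
      (\<forall>v\<in>col_space S T m. inner_on S (\<lambda>\<sigma>. y \<sigma> - orth_proj_on S (col_space S T m) y \<sigma>) v = 0)"
    unfolding orth_proj_on_def by (rule theI')
  then show "orth_proj_on S (col_space S T m) y \<in> col_space S T m"
    and "\<forall>v\<in>col_space S T m. inner_on S (\<lambda>\<sigma>. y \<sigma> - orth_proj_on S (col_space S T m) y \<sigma>) v = 0"
    by blast+
qed

lemma orth_proj_on_col_space_eqI:
  assumes "finite S" "finite T" "p \<in> col_space S T m"
    and "\<forall>v\<in>col_space S T m. inner_on S (\<lambda>\<sigma>. y \<sigma> - p \<sigma>) v = 0"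
  shows "orth_proj_on S (col_space S T m) y = p"
  using col_space_orth_residual_unique[OF assms(1) orth_proj_on_col_space[OF assms(1,2)] assms(3,4)] .

lemma orth_proj_on_col_space_idem:
  assumes "finite S" "finite T" "v \<in> col_space S T m"
  shows "orth_proj_on S (col_space S T m) v = v"
  using assms by (intro orth_proj_on_col_space_eqI) (simp_all add: inner_on_def)

lemma mat_transpose_apply_orth_proj_on:
  assumes "finite S" "finite T"
  shows "mat_transpose_apply S T m (orth_proj_on S (col_space S T m) y) = mat_transpose_apply S T m y"
proof -
  let ?M = "mat_transpose_apply S T m"
  define w where "w = (\<lambda>\<sigma>. y \<sigma> - orth_proj_on S (col_space S T m) y \<sigma>)"
  have "mat_apply S T m (?M w) \<in> col_space S T m"
    by (simp add: col_space_def chainsp_def mat_transpose_apply_def)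
  then have "inner_on T (?M w) (?M w) = 0"
    using orth_proj_on_col_space(2)[OF assms] by (simp add: w_def flip: inner_on_mat_apply)
  then have "\<forall>\<tau>\<in>T. ?M w \<tau> = 0"
    using inner_on_self_eq_0_iff[OF assms(2)] by blast
  then show ?thesis
    by (auto simp: fun_eq_iff w_def mat_transpose_apply_diff) (simp add: mat_transpose_apply_def)
qed

lemma orth_proj_on_col_space_cong:
  assumes "finite S" "finite T" "mat_transpose_apply S T m y = mat_transpose_apply S T m z"
  shows "orth_proj_on S (col_space S T m) y = orth_proj_on S (col_space S T m) z"
proof (rule orth_proj_on_col_space_eqI[OF assms(1,2) orth_proj_on_col_space(1)[OF assms(1,2)]], rule ballI)
  fix v assume "v \<in> col_space S T m"
  then obtain c where v: "v = mat_apply S T m c"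
    by (auto simp: col_space_def)
  let ?p = "orth_proj_on S (col_space S T m) z"
  have "inner_on S (\<lambda>\<sigma>. y \<sigma> - ?p \<sigma>) v
      = inner_on S (\<lambda>\<sigma>. y \<sigma> - z \<sigma>) v + inner_on S (\<lambda>\<sigma>. z \<sigma> - ?p \<sigma>) v"
    by (simp add: inner_on_def sum.distrib[symmetric] algebra_simps)
  also have "inner_on S (\<lambda>\<sigma>. y \<sigma> - z \<sigma>) v = 0"
    unfolding v inner_on_mat_apply mat_transpose_apply_diff assms(3) by (simp add: inner_on_def)
  also have "inner_on S (\<lambda>\<sigma>. z \<sigma> - ?p \<sigma>) v = 0"
    using orth_proj_on_col_space(2)[OF assms(1,2)] \<open>v \<in> col_space S T m\<close> by blast
  finally show "inner_on S (\<lambda>\<sigma>. y \<sigma> - ?p \<sigma>) v = 0"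
    by simp
qed

lemma restr_eq_restr_iff: "restr C f = restr C g \<longleftrightarrow> (\<forall>x\<in>C. f x = g x)"
  by (auto simp: restr_def fun_eq_iff)

lemma orth_proj_sandwich_eq_iff:
  fixes m :: "vset \<Rightarrow> vset \<Rightarrow> real"
  assumes "finite S" "finite T"
  defines "P \<equiv> orth_proj_on S (col_space S T m)"
    and "L \<equiv> mat_apply S T m" and "M \<equiv> mat_transpose_apply S T m"
  shows "restr (chainsp S) (P \<circ> F \<circ> P) = restr (chainsp S) (P \<circ> G \<circ> P)
     \<longleftrightarrow> restr (chainsp T) (M \<circ> F \<circ> L) = restr (chainsp T) (M \<circ> G \<circ> L)"
  unfolding restr_eq_restr_iff o_apply
proof (intro iffI ballI)
  fix c assume PFP: "\<forall>y\<in>chainsp S. P (F (P y)) = P (G (P y))" and "c \<in> chainsp T"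
  then have "L c \<in> col_space S T m"
    by (simp add: col_space_def L_def)
  then have PL: "P (L c) = L c"
    using orth_proj_on_col_space_idem[OF assms(1,2)] by (simp add: P_def)
  have "L c \<in> chainsp S"
    by (simp add: L_def mat_apply_def chainsp_def)
  then have "P (F (P (L c))) = P (G (P (L c)))"
    using PFP by blast
  then have "M (P (F (L c))) = M (P (G (L c)))"
    unfolding PL by simp
  then show "M (F (L c)) = M (G (L c))"
    unfolding P_def M_def mat_transpose_apply_orth_proj_on[OF assms(1,2)] .
next
  fix y assume MFL: "\<forall>c\<in>chainsp T. M (F (L c)) = M (G (L c))" and "y \<in> chainsp S"
  obtain c where "c \<in> chainsp T" and Py: "P y = L c"
    using orth_proj_on_col_space(1)[OF assms(1,2)] by (auto simp: col_space_def P_def L_def)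
  then have "M (F (L c)) = M (G (L c))"
    using MFL by blast
  then have "P (F (L c)) = P (G (L c))"
    unfolding P_def M_def by (rule orth_proj_on_col_space_cong[OF assms(1,2)])
  then show "P (F (P y)) = P (G (P y))"
    unfolding Py .
qed

lemma bij_betw_quotient_kernel_on:
  "bij_betw (\<lambda>K. the_elem (f ` K)) (A // {(a, b). a \<in> A \<and> b \<in> A \<and> f a = f b}) (f ` A)"
proof (rule bij_betw_byWitness[where f' = "\<lambda>y. {a \<in> A. f a = y}"])
  let ?R = "{(a, b). a \<in> A \<and> b \<in> A \<and> f a = f b}"
  have "?R `` {x} = {a \<in> A. f a = f x}" if "x \<in> A" for x
    using that by auto
  then have classes: "A // ?R = (\<lambda>x. {a \<in> A. f a = f x}) ` A"
    unfolding quotient_def UNION_singleton_eq_range by (rule image_cong[OF refl])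
  have the_elem_class: "the_elem (f ` {a \<in> A. f a = f x}) = f x" if "x \<in> A" for x
  proof -
    have "f ` {a \<in> A. f a = f x} = {f x}"
      using that by auto
    then show ?thesis
      by simp
  qed
  show "\<forall>K\<in>A // ?R. {a \<in> A. f a = the_elem (f ` K)} = K"
  proof
    fix K assume "K \<in> A // ?R"
    then obtain x where "x \<in> A" and K: "K = {a \<in> A. f a = f x}"
      by (auto simp: classes)
    show "{a \<in> A. f a = the_elem (f ` K)} = K"
      unfolding K the_elem_class[OF \<open>x \<in> A\<close>] ..
  qed
  show "\<forall>y\<in>f ` A. the_elem (f ` {a \<in> A. f a = y}) = y"
    using the_elem_class by blast
  show "(\<lambda>K. the_elem (f ` K)) ` (A // ?R) \<subseteq> f ` A"
    unfolding classes using the_elem_class by blast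
  show "(\<lambda>y. {a \<in> A. f a = y}) ` f ` A \<subseteq> A // ?R"
    by (auto simp: classes)
qed

lemma finite_simplices: "finite X \<Longrightarrow> finite (simplices X k)"
  by (simp add: simplices_def)

lemma bdT_eq_mat_apply: "bdT X k = mat_apply (simplices X k) (simplices X (k - 1)) bd_coeff"
  by (simp add: fun_eq_iff bdT_def mat_apply_def)

lemma bd_eq_mat_transpose_apply:
  "bd X k = mat_transpose_apply (simplices X k) (simplices X (k - 1)) bd_coeff"
  by (simp add: fun_eq_iff bd_def mat_transpose_apply_def)

lemma bd_eq_mat_apply:
  "bd X k = mat_apply (simplices X (k - 1)) (simplices X k) (\<lambda>\<tau> \<sigma>. bd_coeff \<sigma> \<tau>)"
  by (simp add: fun_eq_iff bd_def mat_apply_def)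

lemma bdT_eq_mat_transpose_apply:
  "bdT X k = mat_transpose_apply (simplices X (k - 1)) (simplices X k) (\<lambda>\<tau> \<sigma>. bd_coeff \<sigma> \<tau>)"
  by (simp add: fun_eq_iff bdT_def mat_transpose_apply_def)

lemma orth_proj_eq_orth_proj_on: "orth_proj X k = orth_proj_on (simplices X k)"
  by (simp add: fun_eq_iff orth_proj_def orth_proj_on_def chain_inner_def inner_on_def)

lemma projP_eq_orth_proj_col_space:
  "projP X k = orth_proj_on (simplices X k) (col_space (simplices X k) (simplices X (k - 1)) bd_coeff)"
  by (simp add: projP_def orth_proj_eq_orth_proj_on col_space_def chains_def bdT_eq_mat_apply)

lemma projQ_eq_orth_proj_col_space:
  "projQ X k = orth_proj_on (simplices X k) (col_space (simplices X k) (simplices X (k + 1)) (\<lambda>\<tau> \<sigma>. bd_coeff \<sigma> \<tau>))"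
  by (simp add: projQ_def orth_proj_eq_orth_proj_on col_space_def chains_def bd_eq_mat_apply)

lemma rel_up_eq_kernel:
  assumes "finite X"
  shows "rel_up X (k + 1) = {(F, G). F \<in> smooth_maps X (k + 1) \<and> G \<in> smooth_maps X (k + 1) \<and>
                                     up_sandwich X k F = up_sandwich X k G}"
  using orth_proj_sandwich_eq_iff[OF finite_simplices[OF assms] finite_simplices[OF assms]]
  by (simp add: rel_up_def up_sandwich_def projP_eq_orth_proj_col_space chains_def bd_eq_mat_transpose_apply bdT_eq_mat_apply)

lemma rel_down_eq_kernel:
  assumes "finite X"
  shows "rel_down X (k - 1) = {(H, H'). H \<in> smooth_maps X (k - 1) \<and> H' \<in> smooth_maps X (k - 1) \<and>
                                       down_sandwich X k H = down_sandwich X k H'}"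
  using orth_proj_sandwich_eq_iff[OF finite_simplices[OF assms] finite_simplices[OF assms]]
  by (simp add: rel_down_def down_sandwich_def projQ_eq_orth_proj_col_space chains_def bd_eq_mat_apply bdT_eq_mat_transpose_apply)

theorem mainTheorem8:
  fixes n d :: nat and X :: "nat set set"
  assumes "simplicial_complex n X"
  shows "(\<forall>F\<in>smooth_maps X (int d + 1). \<forall>G\<in>smooth_maps X (int d + 1).
            (F, G) \<in> rel_up X (int d + 1) \<longrightarrow> up_sandwich X (int d) F = up_sandwich X (int d) G)
       \<and> bij_betw (\<lambda>K. the_elem (up_sandwich X (int d) ` K))
           (smooth_maps X (int d + 1) // rel_up X (int d + 1))
           (up_sandwich X (int d) ` smooth_maps X (int d + 1))
       \<and> (\<forall>H\<in>smooth_maps X (int d - 1). \<forall>H'\<in>smooth_maps X (int d - 1).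
            (H, H') \<in> rel_down X (int d - 1) \<longrightarrow> down_sandwich X (int d) H = down_sandwich X (int d) H')
       \<and> bij_betw (\<lambda>K. the_elem (down_sandwich X (int d) ` K))
           (smooth_maps X (int d - 1) // rel_down X (int d - 1))
           (down_sandwich X (int d) ` smooth_maps X (int d - 1))"
proof -
  have "X \<subseteq> Pow {1..n}"
    using assms by (auto simp: simplicial_complex_def)
  then have "finite X"
    by (rule finite_subset) simp
  then show ?thesis
    by (simp add: rel_up_eq_kernel rel_down_eq_kernel bij_betw_quotient_kernel_on)
qed

end
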